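(* Let $\mathcal{F}$ be a finite set of graphs, let $T\ge0$, and let $G,H$ be graphs on $n$ vertices. Then $$\big\|\phi^{(T)}_{\mathsf{WLOA},\mathcal{F}}(G)-\phi^{(T)}_{\mathsf{WLOA},\mathcal{F}}(H)\big\|\ge\big\|\phi^{(T)}_{\mathsf{WLOA}}(G)-\phi^{(T)}_{\mathsf{WLOA}}(H)\big\|.$$
   Context: Graphs are finite, simple, undirected, unlabeled. $1$-WL: $C^1_0$ constant, $C^1_t(v)=\mathsf{RELABEL}(C^1_{t-1}(v),\{\!\{C^1_{t-1}(u):u\in N(v)\}\!\})$ with a fixed injective $\mathsf{RELABEL}$ shared by all graphs. $1$-WL$_{\mathcal{F}}$: same update with initial colour $(\ell_F(v))_{F\in\mathcal{F}}$, $\ell_F(v)=1$ if $v$ lies in some vertex set $X$ with induced subgraph $G[X]$ isomorphic to $F$, else $0$. Let $\Sigma_t$ (resp. $\Sigma^{\mathcal{F}}_t$) be the colours occurring at round $t$ in $G$ or $H$, and $\phi_t(G)_c$ (resp. $\phi_{\mathcal{F},t}(G)_c$) the number of vertices of $G$ of colour $c$ at round $t$. $\phi^{(T)}_{\mathsf{WLOA}}(G)$ is the $0/1$ vector with one coordinate for each $(t,c,j)$, $t\in\{0,\dots,T\}$, $c\in\Sigma_t$, $j\in\{1,\dots,n\}$, equal to $1$ iff $\phi_t(G)_c\ge j$; $\phi^{(T)}_{\mathsf{WLOA},\mathcal{F}}$ is defined likewise from the $1$-WL$_{\mathcal{F}}$ counts. $\|\cdot\|$ is the Euclidean norm. *)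

theory Defs
  imports Complex_Main "HOL-Library.Multiset"
begin

type_synonym 'v graph = "'v set \<times> ('v \<times> 'v) set"

definition verts :: "'v graph \<Rightarrow> 'v set" where "verts G = fst G"
definition edges :: "'v graph \<Rightarrow> ('v \<times> 'v) set" where "edges G = snd G"

definition simple_graph :: "'v graph \<Rightarrow> bool" where
  "simple_graph G \<longleftrightarrow> finite (verts G) \<and> edges G \<subseteq> verts G \<times> verts G
     \<and> sym (edges G) \<and> irrefl (edges G)"

definition induced :: "'v graph \<Rightarrow> 'v set \<Rightarrow> 'v graph" where
  "induced G X = (X, edges G \<inter> (X \<times> X))"

definition graph_iso :: "'v graph \<Rightarrow> 'w graph \<Rightarrow> bool" where
  "graph_iso G F \<longleftrightarrow> (\<exists>f. bij_betw f (verts G) (verts F) \<and>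
     (\<forall>u\<in>verts G. \<forall>w\<in>verts G. (u, w) \<in> edges G \<longleftrightarrow> (f u, f w) \<in> edges F))"

definition ell :: "'v graph \<Rightarrow> 'w graph \<Rightarrow> 'v \<Rightarrow> bool" where
  "ell G F v \<longleftrightarrow> (\<exists>X \<subseteq> verts G. v \<in> X \<and> graph_iso (induced G X) F)"

text \<open>Initial colour of 1-WL_F: the vector (ell_F(v))_{F in FF}.\<close>
definition initF :: "'w graph set \<Rightarrow> 'v graph \<Rightarrow> 'v \<Rightarrow> ('w graph \<Rightarrow> bool)" where
  "initF FF G v = (\<lambda>F. F \<in> FF \<and> ell G F v)"

text \<open>Colours: the fixed injective RELABEL is realised by the constructor Step.\<close>
datatype 'a wlcol = Init 'a | Step "'a wlcol" "'a wlcol multiset"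

definition nbrs :: "'v graph \<Rightarrow> 'v \<Rightarrow> 'v set" where
  "nbrs G v = {u \<in> verts G. (v, u) \<in> edges G}"

primrec wl :: "'v graph \<Rightarrow> ('v \<Rightarrow> 'a) \<Rightarrow> nat \<Rightarrow> 'v \<Rightarrow> 'a wlcol" where
  "wl G c0 0 v = Init (c0 v)"
| "wl G c0 (Suc t) v = Step (wl G c0 t v) (image_mset (wl G c0 t) (mset_set (nbrs G v)))"

definition wl_count :: "'v graph \<Rightarrow> ('v \<Rightarrow> 'a) \<Rightarrow> nat \<Rightarrow> 'a wlcol \<Rightarrow> nat" where
  "wl_count G c0 t c = card {v \<in> verts G. wl G c0 t v = c}"

definition wloa_index ::
  "'v graph \<Rightarrow> 'v graph \<Rightarrow> ('v \<Rightarrow> 'a) \<Rightarrow> ('v \<Rightarrow> 'a) \<Rightarrow> nat \<Rightarrow> nat \<Rightarrow> (nat \<times> 'a wlcol \<times> nat) set" where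
  "wloa_index G H cG cH T n = {(t, c, j). t \<le> T \<and>
      c \<in> (wl G cG t ` verts G \<union> wl H cH t ` verts H) \<and> 1 \<le> j \<and> j \<le> n}"

definition wloa_vec :: "'v graph \<Rightarrow> ('v \<Rightarrow> 'a) \<Rightarrow> nat \<times> 'a wlcol \<times> nat \<Rightarrow> real" where
  "wloa_vec G c0 i = (case i of (t, c, j) \<Rightarrow> if wl_count G c0 t c \<ge> j then 1 else 0)"

definition wloa_dist ::
  "'v graph \<Rightarrow> 'v graph \<Rightarrow> ('v \<Rightarrow> 'a) \<Rightarrow> ('v \<Rightarrow> 'a) \<Rightarrow> nat \<Rightarrow> nat \<Rightarrow> real" where
  "wloa_dist G H cG cH T n =
     sqrt (\<Sum>i\<in>wloa_index G H cG cH T n. (wloa_vec G cG i - wloa_vec H cH i)\<^sup>2)"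

end

theory Submission
  imports Defs
begin

text \<open>For colour counts \<open>a, b \<le> n\<close> the coordinates \<open>(t, c, j)\<close>, \<open>1 \<le> j \<le> n\<close>, of the two
  WLOA vectors differ exactly for the \<open>|a - b|\<close> thresholds \<open>j\<close> between \<open>a\<close> and \<open>b\<close>, so the
  squared distance is the sum over all rounds of the \<open>\<ell>\<^sub>1\<close>-distance of the colour histograms.
  Running 1-WL from a coarsening \<open>f \<circ> c\<^sub>0\<close> of the initial colouring yields at every round the
  image of the colouring under \<open>map_wlcol f\<close>; each coarse colour class is the disjoint union
  of the fine classes in its fibre, and the triangle inequality shows that merging classes
  can only shrink the \<open>\<ell>\<^sub>1\<close>-distance. Plain 1-WL is the coarsening by the constant map.\<close>

lemma wl_map_initial: "wl G (f \<circ> c0) t v = map_wlcol f (wl G c0 t v)"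
proof (induction t arbitrary: v)
  case 0
  then show ?case by simp
next
  case (Suc t)
  then have "wl G (f \<circ> c0) t = map_wlcol f \<circ> wl G c0 t" by fastforce
  then show ?case using Suc.IH by (simp only: wl.simps wlcol.map multiset.map_comp)
qed

lemma wl_count_le_card: "finite (verts G) \<Longrightarrow> wl_count G c0 t c \<le> card (verts G)"
  unfolding wl_count_def by (intro card_mono) auto

lemma wl_count_map_initial:
  assumes "finite (verts G)" and "finite S" and "wl G c0 t ` verts G \<subseteq> S"
  shows "wl_count G (f \<circ> c0) t c = (\<Sum>c'\<in>{c'\<in>S. map_wlcol f c' = c}. wl_count G c0 t c')"
proof -
  have "{v\<in>verts G. wl G (f \<circ> c0) t v = c}
      = (\<Union>c'\<in>{c'\<in>S. map_wlcol f c' = c}. {v\<in>verts G. wl G c0 t v = c'})"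
    using assms(3) by (auto simp: wl_map_initial)
  moreover have "card (\<Union>c'\<in>{c'\<in>S. map_wlcol f c' = c}. {v\<in>verts G. wl G c0 t v = c'})
      = (\<Sum>c'\<in>{c'\<in>S. map_wlcol f c' = c}. card {v\<in>verts G. wl G c0 t v = c'})"
    using assms(1,2) by (intro card_UN_disjoint) auto
  ultimately show ?thesis unfolding wl_count_def by simp
qed

definition wl_hist_dist ::
  "'v graph \<Rightarrow> 'v graph \<Rightarrow> ('v \<Rightarrow> 'a) \<Rightarrow> ('v \<Rightarrow> 'a) \<Rightarrow> nat \<Rightarrow> real" where
  "wl_hist_dist G H cG cH t =
     (\<Sum>c\<in>wl G cG t ` verts G \<union> wl H cH t ` verts H.
        \<bar>real (wl_count G cG t c) - real (wl_count H cH t c)\<bar>)"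

lemma sum_sq_threshold_diff:
  "(\<Sum>j=1..n. ((if j \<le> a then 1 else 0) - (if j \<le> b then 1 else 0 :: real))\<^sup>2)
     = \<bar>real (min a n) - real (min b n)\<bar>"
proof (induction n)
  case 0
  then show ?case by simp
next
  case (Suc n)
  have "{1..Suc n} = insert (Suc n) {1..n}" by auto
  with Suc show ?case
    by (cases "Suc n \<le> a"; cases "Suc n \<le> b") (simp_all add: min_def)
qed

lemma wloa_index_eq_Sigma:
  "wloa_index G H cG cH T n =
     Sigma {..T} (\<lambda>t. (wl G cG t ` verts G \<union> wl H cH t ` verts H) \<times> {1..n})"
  unfolding wloa_index_def by auto

lemma sum_Sigma_times:
  assumes "finite A" and "\<And>a. a \<in> A \<Longrightarrow> finite (B a)" and "finite C"
  shows "(\<Sum>x\<in>Sigma A (\<lambda>a. B a \<times> C). f x) = (\<Sum>a\<in>A. \<Sum>b\<in>B a. \<Sum>c\<in>C. f (a, b, c))"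
proof -
  have "(\<Sum>a\<in>A. \<Sum>b\<in>B a. \<Sum>c\<in>C. f (a, b, c)) = (\<Sum>a\<in>A. \<Sum>y\<in>B a \<times> C. f (a, y))"
    using assms by (intro sum.cong refl) (simp add: sum.cartesian_product)
  also have "\<dots> = (\<Sum>x\<in>Sigma A (\<lambda>a. B a \<times> C). f x)"
    using assms by (subst sum.Sigma) (auto simp: split_def)
  finally show ?thesis by simp
qed

lemma wloa_dist_eq_sqrt_sum_hist_dist:
  assumes "finite (verts G)" "finite (verts H)" "card (verts G) = n" "card (verts H) = n"
  shows "wloa_dist G H cG cH T n = sqrt (\<Sum>t\<le>T. wl_hist_dist G H cG cH t)"
proof -
  have "(\<Sum>j=1..n. (wloa_vec G cG (t, c, j) - wloa_vec H cH (t, c, j))\<^sup>2)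
      = \<bar>real (wl_count G cG t c) - real (wl_count H cH t c)\<bar>" for t c
    using wl_count_le_card[OF assms(1), of cG t c] wl_count_le_card[OF assms(2), of cH t c]
    unfolding wloa_vec_def prod.case sum_sq_threshold_diff by (simp add: assms(3,4))
  then show ?thesis
    using assms(1,2)
    by (simp add: wloa_dist_def wl_hist_dist_def wloa_index_eq_Sigma sum_Sigma_times)
qed

lemma sum_abs_diff_fibres_le:
  fixes a b :: "'c \<Rightarrow> 'b::ordered_ab_group_add_abs"
  assumes "finite S"
  shows "(\<Sum>y\<in>p ` S. \<bar>(\<Sum>x\<in>{x\<in>S. p x = y}. a x) - (\<Sum>x\<in>{x\<in>S. p x = y}. b x)\<bar>)
    \<le> (\<Sum>x\<in>S. \<bar>a x - b x\<bar>)"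
proof -
  have "(\<Sum>y\<in>p ` S. \<bar>(\<Sum>x\<in>{x\<in>S. p x = y}. a x) - (\<Sum>x\<in>{x\<in>S. p x = y}. b x)\<bar>)
      \<le> (\<Sum>y\<in>p ` S. \<Sum>x\<in>{x\<in>S. p x = y}. \<bar>a x - b x\<bar>)"
    by (intro sum_mono) (simp add: sum_subtractf[symmetric] sum_abs)
  also have "\<dots> = (\<Sum>x\<in>S. \<bar>a x - b x\<bar>)"
    using assms by (rule sum.image_gen[symmetric])
  finally show ?thesis .
qed

lemma wl_hist_dist_map_initial_le:
  assumes "finite (verts G)" and "finite (verts H)"
  shows "wl_hist_dist G H (f \<circ> cG) (f \<circ> cH) t \<le> wl_hist_dist G H cG cH t"
proof -
  define S where "S = wl G cG t ` verts G \<union> wl H cH t ` verts H"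
  have "finite S" unfolding S_def using assms by simp
  have colours: "wl G (f \<circ> cG) t ` verts G \<union> wl H (f \<circ> cH) t ` verts H = map_wlcol f ` S"
    unfolding S_def by (auto simp: wl_map_initial)
  have "wl_count G (f \<circ> cG) t c = (\<Sum>c'\<in>{c'\<in>S. map_wlcol f c' = c}. wl_count G cG t c')"
    and "wl_count H (f \<circ> cH) t c = (\<Sum>c'\<in>{c'\<in>S. map_wlcol f c' = c}. wl_count H cH t c')" for c
    by (intro wl_count_map_initial; use assms \<open>finite S\<close> in \<open>auto simp: S_def\<close>)+
  then show ?thesis
    using sum_abs_diff_fibres_le[OF \<open>finite S\<close>, where p = "map_wlcol f"
        and a = "\<lambda>c. real (wl_count G cG t c)" and b = "\<lambda>c. real (wl_count H cH t c)"]
    by (simp add: wl_hist_dist_def colours of_nat_sum S_def)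
qed

theorem proposition16:
  fixes FF :: "'w graph set" and G H :: "'v graph" and T n :: nat
  assumes "finite FF" and "\<forall>F\<in>FF. simple_graph F"
    and "simple_graph G" and "simple_graph H"
    and "card (verts G) = n" and "card (verts H) = n"
  shows "wloa_dist G H (initF FF G) (initF FF H) T n
           \<ge> wloa_dist G H (\<lambda>_. ()) (\<lambda>_. ()) T n"
proof -
  have fin: "finite (verts G)" "finite (verts H)"
    using assms(3,4) unfolding simple_graph_def by auto
  have "(\<lambda>_. ()) = (\<lambda>_. ()) \<circ> initF FF G" and "(\<lambda>_. ()) = (\<lambda>_. ()) \<circ> initF FF H"
    by auto
  then have "wl_hist_dist G H (\<lambda>_. ()) (\<lambda>_. ()) t \<le> wl_hist_dist G H (initF FF G) (initF FF H) t"
    for t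
    using wl_hist_dist_map_initial_le[OF fin] by metis
  then show ?thesis
    by (simp add: wloa_dist_eq_sqrt_sum_hist_dist fin assms(5,6) sum_mono)
qed

end
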